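(* Let $E=\bigcap_{i=1}^\ell\{x\in M: f_i(x)\le0\}$ be a regular intersection (all $I_i=(-\infty,0]$). Then $E$ is a regular closed subset of $M$: its interior in $M$ is $\operatorname{int}E=\bigcap_{i=1}^\ell\{x\in M: f_i(x)<0\}$, and $E=\overline{\operatorname{int}E}$ (closure in $M$).
   Context: $M\subset\mathbb{R}^d$ is a compact smooth submanifold without boundary with the induced metric. "Regular intersection" means: $E\neq\emptyset$, each $f_i:M\to\mathbb{R}$ smooth with $0$ a regular value, and for some $\mu>0,\Lambda\ge0$: (R1) for any indices $i_1<\dots<i_k$, the differential of $(f_{i_1},\dots,f_{i_k}):M\to\mathbb{R}^k$ is surjective at every point of $\{f_{i_1}=\dots=f_{i_k}=0\}\cap E$ with smallest nonzero singular value $\ge\mu$; (R2) the Hessian operator norms of all $f_i$ on $M$ are $\le\Lambda$. *)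

theory Defs
  imports "HOL-Analysis.Analysis"
begin

fun dd :: "'a::real_normed_vector list \<Rightarrow> ('a \<Rightarrow> 'b::real_normed_vector) \<Rightarrow> 'a \<Rightarrow> 'b" where
  "dd [] f = f"
| "dd (v # vs) f = (\<lambda>x. frechet_derivative (dd vs f) (at x) v)"

definition smooth_on :: "'a::real_normed_vector set \<Rightarrow> ('a \<Rightarrow> 'b::real_normed_vector) \<Rightarrow> bool" where
  "smooth_on U f \<longleftrightarrow> open U \<and> (\<forall>vs. \<forall>x\<in>U. dd vs f differentiable (at x))"

definition smooth_submanifold :: "'a::euclidean_space set \<Rightarrow> bool" where
  "smooth_submanifold M \<longleftrightarrow>
     (\<forall>p\<in>M. \<exists>U V (\<phi>::'a \<Rightarrow> 'a) \<psi> S.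
        open U \<and> open V \<and> p \<in> U \<and> subspace S \<and>
        smooth_on U \<phi> \<and> smooth_on V \<psi> \<and> \<phi> ` U = V \<and>
        (\<forall>x\<in>U. \<psi> (\<phi> x) = x) \<and> (\<forall>y\<in>V. \<phi> (\<psi> y) = y) \<and>
        \<phi> ` (M \<inter> U) = V \<inter> S)"

definition smooth_fun_on :: "'a::euclidean_space set \<Rightarrow> ('a \<Rightarrow> real) \<Rightarrow> bool" where
  "smooth_fun_on M f \<longleftrightarrow>
     (\<forall>p\<in>M. \<exists>U g. open U \<and> p \<in> U \<and> smooth_on U g \<and> (\<forall>x\<in>M \<inter> U. f x = g x))"

definition tangent_space :: "'a::euclidean_space set \<Rightarrow> 'a \<Rightarrow> 'a set" where
  "tangent_space M p = {v. \<exists>\<gamma>::real \<Rightarrow> 'a. (\<forall>t. \<gamma> t \<in> M) \<and> \<gamma> 0 = p \<and> (\<gamma> has_vector_derivative v) (at 0)}"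

text \<open>Differential of f : M -> R at x (only its values on the tangent space are meaningful).\<close>
definition mdiff :: "'a::euclidean_space set \<Rightarrow> ('a \<Rightarrow> real) \<Rightarrow> 'a \<Rightarrow> 'a \<Rightarrow> real" where
  "mdiff M f x = (SOME L. \<forall>(\<gamma>::real \<Rightarrow> 'a) w. (\<forall>t. \<gamma> t \<in> M) \<and> \<gamma> 0 = x \<and>
       (\<gamma> has_vector_derivative w) (at 0) \<longrightarrow> ((f \<circ> \<gamma>) has_real_derivative L w) (at 0))"

definition regular_value0 :: "'a::euclidean_space set \<Rightarrow> ('a \<Rightarrow> real) \<Rightarrow> bool" where
  "regular_value0 M f \<longleftrightarrow>
     (\<forall>x\<in>M. f x = 0 \<longrightarrow> (\<exists>v\<in>tangent_space M x. mdiff M f x v \<noteq> 0))"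

text \<open>The differential of (f_j)_{j in J} : M -> R^J at x is surjective and its smallest
  nonzero singular value is at least mu.  For a linear map A onto R^J this is equivalent to:
  every y in R^J has a preimage v in T_xM with mu * |v| <= |y| (the pseudo-inverse has
  operator norm 1/sigma_min).\<close>
definition diff_surj_sv_ge :: "'a::euclidean_space set \<Rightarrow> (nat \<Rightarrow> 'a \<Rightarrow> real) \<Rightarrow> nat set \<Rightarrow> 'a \<Rightarrow> real \<Rightarrow> bool" where
  "diff_surj_sv_ge M f J x \<mu> \<longleftrightarrow>
     (\<forall>y::nat \<Rightarrow> real. \<exists>v\<in>tangent_space M x.
        (\<forall>j\<in>J. mdiff M (f j) x v = y j) \<and> \<mu> * norm v \<le> sqrt (\<Sum>j\<in>J. (y j)\<^sup>2))"

definition geodesic :: "'a::euclidean_space set \<Rightarrow> (real \<Rightarrow> 'a) \<Rightarrow> bool" where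
  "geodesic M \<gamma> \<longleftrightarrow> (\<forall>t. \<gamma> t \<in> M) \<and> (\<forall>t. \<gamma> differentiable (at t)) \<and>
     (\<forall>t. (\<lambda>s. vector_derivative \<gamma> (at s)) differentiable (at t)) \<and>
     (\<forall>t. \<forall>v\<in>tangent_space M (\<gamma> t).
         vector_derivative (\<lambda>s. vector_derivative \<gamma> (at s)) (at t) \<bullet> v = 0)"

text \<open>Operator norm of the Riemannian Hessian of f is at most Lambda at every point of M:
  Hess f(v,v) = (f o gamma)''(0) for the geodesic with gamma'(0) = v, and the operator norm of
  a symmetric bilinear form is sup over unit v of |Hess f(v,v)|.\<close>
definition hessian_norm_le :: "'a::euclidean_space set \<Rightarrow> ('a \<Rightarrow> real) \<Rightarrow> real \<Rightarrow> bool" where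
  "hessian_norm_le M f \<Lambda> \<longleftrightarrow>
     (\<forall>\<gamma> t. geodesic M \<gamma> \<longrightarrow>
        \<bar>deriv (deriv (f \<circ> \<gamma>)) t\<bar> \<le> \<Lambda> * (norm (vector_derivative \<gamma> (at t)))\<^sup>2)"

definition sublevel_intersection :: "'a set \<Rightarrow> (nat \<Rightarrow> 'a \<Rightarrow> real) \<Rightarrow> nat \<Rightarrow> 'a set" where
  "sublevel_intersection M f l = {x\<in>M. \<forall>i\<in>{1..l}. f i x \<le> 0}"

definition regular_intersection :: "'a::euclidean_space set \<Rightarrow> (nat \<Rightarrow> 'a \<Rightarrow> real) \<Rightarrow> nat \<Rightarrow> bool" where
  "regular_intersection M f l \<longleftrightarrow>
     (let E = sublevel_intersection M f l in
      E \<noteq> {} \<and>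
      (\<forall>i\<in>{1..l}. smooth_fun_on M (f i) \<and> regular_value0 M (f i)) \<and>
      (\<exists>\<mu>>0. \<exists>\<Lambda>\<ge>0.
         (\<forall>J. J \<subseteq> {1..l} \<and> J \<noteq> {} \<longrightarrow>
            (\<forall>x\<in>E. (\<forall>j\<in>J. f j x = 0) \<longrightarrow> diff_surj_sv_ge M f J x \<mu>)) \<and>
         (\<forall>i\<in>{1..l}. hessian_norm_le M (f i) \<Lambda>)))"

end

theory Submission
  imports Defs
begin

text \<open>
  If 0 is a regular value of \<open>f\<^sub>i\<close>, a zero \<open>x\<close> of \<open>f\<^sub>i\<close> is not a local maximum of \<open>f\<^sub>i\<close> on \<open>M\<close>:
  along a curve in \<open>M\<close> through \<open>x\<close> whose velocity \<open>v\<close> has \<open>df\<^sub>i(v) \<noteq> 0\<close>, the function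
  \<open>f\<^sub>i\<close> takes positive values arbitrarily close to \<open>x\<close>. So no point of the interior of \<open>E\<close>
  is a zero of any \<open>f\<^sub>i\<close>, and the strict sublevel intersection, being open, is the interior.
  Conversely, at \<open>x \<in> E\<close> the surjectivity in (R1) for the set of active constraints gives
  a tangent vector \<open>v\<close> with \<open>df\<^sub>j(v) = -1\<close> for every active \<open>j\<close>; along a curve with velocity
  \<open>v\<close> all active \<open>f\<^sub>j\<close> become negative at once for small positive times, and the
  inactive ones stay negative by continuity, so \<open>x\<close> is a limit of interior points.
\<close>

lemma smooth_fun_on_locally_differentiable:
  assumes "smooth_fun_on M f" "p \<in> M"
  obtains U g where "open U" "p \<in> U" "\<And>x. x \<in> M \<inter> U \<Longrightarrow> f x = g x" "g differentiable (at p)"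
proof -
  obtain U g where "open U" "p \<in> U" "smooth_on U g" "\<forall>x\<in>M \<inter> U. f x = g x"
    using assms unfolding smooth_fun_on_def by blast
  moreover have "g differentiable (at p)"
    using \<open>smooth_on U g\<close> \<open>p \<in> U\<close> dd.simps(1) unfolding smooth_on_def by metis
  ultimately show ?thesis using that by blast
qed

lemma smooth_fun_on_imp_continuous_on:
  assumes "smooth_fun_on M f"
  shows "continuous_on M f"
  unfolding continuous_on_eq_continuous_within
proof
  fix p assume "p \<in> M"
  then obtain U g where U: "open U" "p \<in> U" "\<And>x. x \<in> M \<inter> U \<Longrightarrow> f x = g x"
    and "g differentiable (at p)"
    using smooth_fun_on_locally_differentiable[OF assms] by metis
  then have "continuous (at p within M) g"
    by (simp add: differentiable_at_withinI differentiable_imp_continuous_within)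
  moreover have "openin (top_of_set M) (M \<inter> U)"
    using \<open>open U\<close> by (simp add: openin_open_Int)
  ultimately show "continuous (at p within M) f"
    by (rule continuous_transform_within_openin) (use U \<open>p \<in> M\<close> in auto)
qed

lemma has_vector_derivative_eventually_in_open:
  assumes "(\<gamma> has_vector_derivative v) (at t)" "open U" "\<gamma> t \<in> U"
  shows "\<forall>\<^sub>F s in at t within S. \<gamma> s \<in> U"
proof -
  have "(\<gamma> \<longlongrightarrow> \<gamma> t) (at t within S)"
    using has_vector_derivative_continuous[OF assms(1)] unfolding isCont_def
    by (rule tendsto_within_subset) simp
  then show ?thesis
    using assms(2,3) by (rule topological_tendstoD)
qed

lemma has_real_derivative_mdiff:
  assumes "smooth_fun_on M f" "x \<in> M"
    and "\<forall>t. \<gamma> t \<in> M" "\<gamma> 0 = x" "(\<gamma> has_vector_derivative w) (at 0)"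
  shows "((f \<circ> \<gamma>) has_real_derivative mdiff M f x w) (at 0)"
proof -
  obtain U g where U: "open U" "x \<in> U" "\<And>y. y \<in> M \<inter> U \<Longrightarrow> f y = g y"
    and "g differentiable (at x)"
    using smooth_fun_on_locally_differentiable[OF assms(1,2)] by metis
  define G where "G = frechet_derivative g (at x)"
  have g_deriv: "(g has_derivative G) (at x)"
    using \<open>g differentiable (at x)\<close> G_def frechet_derivative_works by blast
  have "((f \<circ> c) has_real_derivative G v) (at 0)"
    if c: "\<forall>t. c t \<in> M" "c 0 = x" "(c has_vector_derivative v) (at 0)" for c v
  proof -
    have "((g \<circ> c) has_vector_derivative G v) (at 0)"
      using vector_derivative_diff_chain_within[of c v 0 UNIV g G] g_deriv c
      by (simp add: has_derivative_at_withinI)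
    then have "((g \<circ> c) has_real_derivative G v) (at 0)"
      by (simp add: has_real_derivative_iff_has_vector_derivative)
    moreover have "\<forall>\<^sub>F t in at 0. c t \<in> U"
      using has_vector_derivative_eventually_in_open[OF c(3) \<open>open U\<close>] U(2) c(2) by simp
    then have "\<forall>\<^sub>F t in at 0. (g \<circ> c) t = (f \<circ> c) t"
      by eventually_elim (use U(3) c(1) in auto)
    ultimately show ?thesis
      unfolding has_field_derivative_def
      by (rule has_derivative_transform_eventually) (use U(2,3) c(1,2) in auto)
  qed
  then have "\<exists>L. \<forall>(c::real \<Rightarrow> 'a) v. (\<forall>t. c t \<in> M) \<and> c 0 = x \<and>
       (c has_vector_derivative v) (at 0) \<longrightarrow> ((f \<circ> c) has_real_derivative L v) (at 0)"
    by blast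
  then show ?thesis
    unfolding mdiff_def by (rule someI2_ex) (use assms(3-5) in blast)
qed

definition strict_sublevel_intersection :: "'a set \<Rightarrow> (nat \<Rightarrow> 'a \<Rightarrow> real) \<Rightarrow> nat \<Rightarrow> 'a set" where
  "strict_sublevel_intersection M f l = {x\<in>M. \<forall>i\<in>{1..l}. f i x < 0}"

lemma strict_sublevel_intersection_subset:
  "strict_sublevel_intersection M f l \<subseteq> sublevel_intersection M f l"
  unfolding strict_sublevel_intersection_def sublevel_intersection_def by (auto intro: less_imp_le)

lemma openin_strict_sublevel_intersection:
  assumes "\<And>i. i \<in> {1..l} \<Longrightarrow> continuous_on M (f i)"
  shows "openin (top_of_set M) (strict_sublevel_intersection M f l)"
proof -
  have "strict_sublevel_intersection M f l = M \<inter> \<Inter>((\<lambda>i. M \<inter> f i -` {..<0}) ` {1..l})"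
    unfolding strict_sublevel_intersection_def by auto
  moreover have "openin (top_of_set M) (M \<inter> f i -` {..<0})" if "i \<in> {1..l}" for i
    using assms[OF that] by (rule continuous_openin_preimage_gen) simp
  ultimately show ?thesis
    by (metis (no_types, lifting) finite_atLeastAtMost finite_imageI imageE openin_Int_Inter
        openin_topspace topspace_euclidean_subtopology)
qed

lemma closedin_sublevel_intersection:
  assumes "\<And>i. i \<in> {1..l} \<Longrightarrow> continuous_on M (f i)"
  shows "closedin (top_of_set M) (sublevel_intersection M f l)"
proof -
  have "sublevel_intersection M f l = M - (\<Union>i\<in>{1..l}. M \<inter> f i -` {0<..})"
    unfolding sublevel_intersection_def by (auto simp: not_less)
  moreover have "openin (top_of_set M) (M \<inter> f i -` {0<..})" if "i \<in> {1..l}" for i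
    using assms[OF that] by (rule continuous_openin_preimage_gen) simp
  ultimately show ?thesis
    by (metis (no_types, lifting) closedin_diff closedin_topspace imageE openin_Union
        topspace_euclidean_subtopology)
qed

lemma regular_zero_not_local_max:
  assumes "smooth_fun_on M f" "regular_value0 M f" "x \<in> M" "f x = 0"
    and "openin (top_of_set M) T" "x \<in> T"
  shows "\<exists>y\<in>T. 0 < f y"
proof (rule ccontr)
  assume "\<not> (\<exists>y\<in>T. 0 < f y)"
  then have T_nonpos: "\<And>y. y \<in> T \<Longrightarrow> f y \<le> 0" by (meson not_less)
  obtain v where "v \<in> tangent_space M x" and v: "mdiff M f x v \<noteq> 0"
    using assms(2-4) unfolding regular_value0_def by blast
  then obtain \<gamma> where \<gamma>: "\<forall>t. \<gamma> t \<in> M" "\<gamma> 0 = x" "(\<gamma> has_vector_derivative v) (at 0)"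
    unfolding tangent_space_def by blast
  obtain U where "open U" and T: "T = M \<inter> U"
    using assms(5) openin_open by blast
  have "\<forall>\<^sub>F t in at 0. \<gamma> t \<in> U"
    using has_vector_derivative_eventually_in_open[OF \<gamma>(3) \<open>open U\<close>] \<gamma>(2) T \<open>x \<in> T\<close> by blast
  then obtain d where "0 < d" and d: "\<forall>t. t \<noteq> 0 \<and> dist t 0 < d \<longrightarrow> \<gamma> t \<in> U"
    unfolding eventually_at by auto
  have "(f \<circ> \<gamma>) t \<le> (f \<circ> \<gamma>) 0" if "\<bar>0 - t\<bar> < d" for t
  proof (cases "t = 0")
    case False
    with d that have "\<gamma> t \<in> T"
      using T \<gamma>(1) by (simp add: dist_real_def)
    then show ?thesis
      using T_nonpos \<gamma>(2) assms(4) by simp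
  qed simp
  with has_real_derivative_mdiff[OF assms(1,3) \<gamma>] \<open>0 < d\<close> have "mdiff M f x v = 0"
    by (intro DERIV_local_max) blast+
  with v show False ..
qed

lemma interior_of_sublevel_intersection:
  assumes "\<And>i. i \<in> {1..l} \<Longrightarrow> smooth_fun_on M (f i) \<and> regular_value0 M (f i)"
  shows "top_of_set M interior_of sublevel_intersection M f l = strict_sublevel_intersection M f l"
proof
  show "strict_sublevel_intersection M f l \<subseteq> top_of_set M interior_of sublevel_intersection M f l"
    using assms smooth_fun_on_imp_continuous_on
    by (intro interior_of_maximal strict_sublevel_intersection_subset openin_strict_sublevel_intersection)
      blast
next
  show "top_of_set M interior_of sublevel_intersection M f l \<subseteq> strict_sublevel_intersection M f l"
  proof
    fix x assume "x \<in> top_of_set M interior_of sublevel_intersection M f l"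
    then obtain T where T: "openin (top_of_set M) T" "x \<in> T" "T \<subseteq> sublevel_intersection M f l"
      unfolding interior_of_def by blast
    then have "x \<in> M" and x_nonpos: "\<forall>i\<in>{1..l}. f i x \<le> 0"
      unfolding sublevel_intersection_def by auto
    have "f i x \<noteq> 0" if i: "i \<in> {1..l}" for i
    proof
      assume "f i x = 0"
      then obtain y where "y \<in> T" "0 < f i y"
        using regular_zero_not_local_max[of M "f i" x T, OF _ _ \<open>x \<in> M\<close> \<open>f i x = 0\<close> T(1,2)] assms[OF i]
        by blast
      with T(3) i show False
        unfolding sublevel_intersection_def by fastforce
    qed
    with x_nonpos \<open>x \<in> M\<close> show "x \<in> strict_sublevel_intersection M f l"
      unfolding strict_sublevel_intersection_def by (auto simp: order.strict_iff_order)
  qed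
qed

lemma eventually_at_right_neg_of_deriv:
  fixes \<phi> :: "real \<Rightarrow> real"
  assumes "(\<phi> has_real_derivative D) (at 0)" "\<phi> 0 \<le> 0" "\<phi> 0 = 0 \<Longrightarrow> D < 0"
  shows "\<forall>\<^sub>F t in at_right 0. \<phi> t < 0"
proof (cases "\<phi> 0 = 0")
  case True
  then obtain d where "0 < d" "\<forall>h>0. h < d \<longrightarrow> \<phi> (0 + h) < \<phi> 0"
    using DERIV_neg_dec_right[OF assms(1) assms(3)] by blast
  then show ?thesis
    unfolding eventually_at_right_field using True by auto
next
  case False
  have "(\<phi> \<longlongrightarrow> \<phi> 0) (at_right 0)"
    using DERIV_isCont[OF assms(1)] unfolding isCont_def by (rule tendsto_within_subset) simp
  then show ?thesis
    using False assms(2) by (intro order_tendstoD(2)) auto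
qed

lemma in_closure_of_strict_sublevel_intersection:
  assumes "\<And>i. i \<in> {1..l} \<Longrightarrow> smooth_fun_on M (f i)" "x \<in> sublevel_intersection M f l"
    and "v \<in> tangent_space M x" "\<And>i. i \<in> {1..l} \<Longrightarrow> f i x = 0 \<Longrightarrow> mdiff M (f i) x v < 0"
  shows "x \<in> top_of_set M closure_of strict_sublevel_intersection M f l"
proof -
  have "x \<in> M" and x_nonpos: "\<And>i. i \<in> {1..l} \<Longrightarrow> f i x \<le> 0"
    using assms(2) unfolding sublevel_intersection_def by auto
  obtain \<gamma> where \<gamma>: "\<forall>t. \<gamma> t \<in> M" "\<gamma> 0 = x" "(\<gamma> has_vector_derivative v) (at 0)"
    using assms(3) unfolding tangent_space_def by blast
  have "\<forall>\<^sub>F t in at_right 0. (f i \<circ> \<gamma>) t < 0" if i: "i \<in> {1..l}" for i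
    using has_real_derivative_mdiff[OF assms(1)[OF i] \<open>x \<in> M\<close> \<gamma>] x_nonpos[OF i] assms(4)[OF i] \<gamma>(2)
    by (intro eventually_at_right_neg_of_deriv[where \<phi> = "f i \<circ> \<gamma>"]) auto
  then have eventually_strict: "\<forall>\<^sub>F t in at_right 0. \<gamma> t \<in> strict_sublevel_intersection M f l"
    unfolding strict_sublevel_intersection_def using \<gamma>(1)
    by (auto intro: eventually_ball_finite elim: eventually_mono)
  show ?thesis
    unfolding in_closure_of
  proof (intro conjI allI impI)
    show "x \<in> topspace (top_of_set M)"
      using \<open>x \<in> M\<close> by simp
    fix T assume "x \<in> T \<and> openin (top_of_set M) T"
    then obtain U where "open U" "x \<in> U" "T = M \<inter> U"
      by (auto simp: openin_open)
    then have "\<forall>\<^sub>F t in at_right 0. \<gamma> t \<in> U"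
      using has_vector_derivative_eventually_in_open[OF \<gamma>(3)] \<gamma>(2) by simp
    then obtain t where "\<gamma> t \<in> strict_sublevel_intersection M f l" "\<gamma> t \<in> U"
      using eventually_happens'[OF trivial_limit_at_right_real eventually_conj[OF eventually_strict]]
      by blast
    then show "\<exists>y. y \<in> strict_sublevel_intersection M f l \<and> y \<in> T"
      using \<gamma>(1) \<open>T = M \<inter> U\<close> by blast
  qed
qed

lemma closure_of_strict_sublevel_intersection:
  assumes "\<And>i. i \<in> {1..l} \<Longrightarrow> smooth_fun_on M (f i)"
    and "\<And>x. x \<in> sublevel_intersection M f l \<Longrightarrow>
      \<exists>v\<in>tangent_space M x. \<forall>i\<in>{1..l}. f i x = 0 \<longrightarrow> mdiff M (f i) x v < 0"
  shows "top_of_set M closure_of strict_sublevel_intersection M f l = sublevel_intersection M f l"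
proof
  show "top_of_set M closure_of strict_sublevel_intersection M f l \<subseteq> sublevel_intersection M f l"
    using assms(1) smooth_fun_on_imp_continuous_on
    by (intro closure_of_minimal strict_sublevel_intersection_subset closedin_sublevel_intersection) blast
  show "sublevel_intersection M f l \<subseteq> top_of_set M closure_of strict_sublevel_intersection M f l"
  proof
    fix x assume "x \<in> sublevel_intersection M f l"
    with assms(2) obtain v where "v \<in> tangent_space M x"
      "\<And>i. i \<in> {1..l} \<Longrightarrow> f i x = 0 \<Longrightarrow> mdiff M (f i) x v < 0"
      by blast
    with assms(1) \<open>x \<in> sublevel_intersection M f l\<close>
    show "x \<in> top_of_set M closure_of strict_sublevel_intersection M f l"
      by (rule in_closure_of_strict_sublevel_intersection)
  qed
qed

lemma exists_descent_direction:
  assumes "\<And>J. J \<subseteq> {1..l} \<Longrightarrow> J \<noteq> {} \<Longrightarrow> \<forall>j\<in>J. f j x = 0 \<Longrightarrow> diff_surj_sv_ge M f J x \<mu>"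
    and "x \<in> M"
  shows "\<exists>v\<in>tangent_space M x. \<forall>i\<in>{1..l}. f i x = 0 \<longrightarrow> mdiff M (f i) x v < 0"
proof (cases "{i\<in>{1..l}. f i x = 0} = {}")
  case True
  have "0 \<in> tangent_space M x"
    unfolding tangent_space_def using \<open>x \<in> M\<close> by (intro CollectI exI[of _ "\<lambda>_. x"]) auto
  with True show ?thesis by blast
next
  case False
  then have "diff_surj_sv_ge M f {i\<in>{1..l}. f i x = 0} x \<mu>"
    by (intro assms(1)) auto
  then obtain v where "v \<in> tangent_space M x" "\<forall>j\<in>{i\<in>{1..l}. f i x = 0}. mdiff M (f j) x v = -1"
    unfolding diff_surj_sv_ge_def by (auto dest: spec[where x = "\<lambda>_. -1"])
  then show ?thesis by force
qed

theorem mainTheorem9: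
  fixes M :: "'a::euclidean_space set" and f :: "nat \<Rightarrow> 'a \<Rightarrow> real" and l :: nat
  assumes "compact M" and "smooth_submanifold M"
    and "regular_intersection M f l"
  shows "(top_of_set M) interior_of (sublevel_intersection M f l) = {x\<in>M. \<forall>i\<in>{1..l}. f i x < 0}
     \<and> (top_of_set M) closure_of ((top_of_set M) interior_of (sublevel_intersection M f l))
         = sublevel_intersection M f l"
proof -
  let ?E = "sublevel_intersection M f l"
  have regular: "\<And>i. i \<in> {1..l} \<Longrightarrow> smooth_fun_on M (f i) \<and> regular_value0 M (f i)"
    using assms(3) unfolding regular_intersection_def Let_def by blast
  obtain \<mu> where surj: "\<forall>J. J \<subseteq> {1..l} \<and> J \<noteq> {} \<longrightarrow>
      (\<forall>x\<in>?E. (\<forall>j\<in>J. f j x = 0) \<longrightarrow> diff_surj_sv_ge M f J x \<mu>)"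
    using assms(3) unfolding regular_intersection_def Let_def by blast
  have descent: "\<exists>v\<in>tangent_space M x. \<forall>i\<in>{1..l}. f i x = 0 \<longrightarrow> mdiff M (f i) x v < 0"
    if "x \<in> ?E" for x
    using surj that by (intro exists_descent_direction) (auto simp: sublevel_intersection_def)
  have "top_of_set M interior_of ?E = strict_sublevel_intersection M f l"
    using regular by (rule interior_of_sublevel_intersection)
  moreover have "top_of_set M closure_of strict_sublevel_intersection M f l = ?E"
    using regular descent by (intro closure_of_strict_sublevel_intersection) blast+
  ultimately show ?thesis
    unfolding strict_sublevel_intersection_def by simp
qed

end
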